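(* Let $G$ be a bridgeless cubic graph and let $G_\triangle$ be the graph obtained from $G$ by replacing every vertex by a triangle. Then $G$ is $3$-edge-colorable if and only if $L(G_\triangle)=\frac{3}{2}\,l(G_\triangle)$.
   Context: Graphs are finite, undirected, without loops or multiple edges. $\nu(G)$ denotes the maximum size of a matching of $G$; a matching is maximum if it has $\nu(G)$ edges. For $F\subseteq E(G)$, $G\setminus F$ is the graph with vertex set $V(G)$ and edge set $E(G)\setminus F$. Define $L(G)=\max\{\nu(G\setminus F): F \text{ a maximum matching of } G\}$ and $l(G)=\min\{\nu(G\setminus F): F \text{ a maximum matching of } G\}$. Replacing a vertex $v$ of a cubic graph by a triangle means: delete $v$, add three new vertices $v_1,v_2,v_3$ forming a triangle, and for the three edges $vu_1,vu_2,vu_3$ formerly incident to $v$, join $v_i$ to the endpoint corresponding to $u_i$; doing this for all vertices simultaneously gives $G_\triangle$, whose edges are the triangle edges together with edges corresponding bijectively to $E(G)$. *)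

theory Defs
  imports Complex_Main
begin

definition graph :: "'a set \<Rightarrow> 'a set set \<Rightarrow> bool" where
  "graph V E \<longleftrightarrow> finite V \<and> (\<forall>e\<in>E. \<exists>u v. e = {u, v} \<and> u \<noteq> v \<and> u \<in> V \<and> v \<in> V)"

definition degree :: "'a set set \<Rightarrow> 'a \<Rightarrow> nat" where
  "degree E v = card {e \<in> E. v \<in> e}"

definition cubic :: "'a set \<Rightarrow> 'a set set \<Rightarrow> bool" where
  "cubic V E \<longleftrightarrow> graph V E \<and> (\<forall>v\<in>V. degree E v = 3)"

definition adj :: "'a set set \<Rightarrow> 'a \<Rightarrow> 'a \<Rightarrow> bool" where
  "adj E u v \<longleftrightarrow> {u, v} \<in> E \<and> u \<noteq> v"

definition is_bridge :: "'a set set \<Rightarrow> 'a set \<Rightarrow> bool" where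
  "is_bridge E e \<longleftrightarrow> e \<in> E \<and>
     (\<exists>u v. e = {u, v} \<and> u \<noteq> v \<and> \<not> (adj (E - {e}))\<^sup>*\<^sup>* u v)"

definition bridgeless :: "'a set \<Rightarrow> 'a set set \<Rightarrow> bool" where
  "bridgeless V E \<longleftrightarrow> (\<forall>e\<in>E. \<not> is_bridge E e)"

definition matching :: "'a set set \<Rightarrow> 'a set set \<Rightarrow> bool" where
  "matching E M \<longleftrightarrow> M \<subseteq> E \<and> (\<forall>e1\<in>M. \<forall>e2\<in>M. e1 \<noteq> e2 \<longrightarrow> e1 \<inter> e2 = {})"

definition nu :: "'a set set \<Rightarrow> nat" where
  "nu E = Max (card ` {M. matching E M})"

definition max_matching :: "'a set set \<Rightarrow> 'a set set \<Rightarrow> bool" where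
  "max_matching E F \<longleftrightarrow> matching E F \<and> card F = nu E"

text \<open>G minus F has edge set E - F (same vertices; nu depends only on edges).\<close>
definition L_inv :: "'a set set \<Rightarrow> nat" where
  "L_inv E = Max ((\<lambda>F. nu (E - F)) ` {F. max_matching E F})"

definition l_inv :: "'a set set \<Rightarrow> nat" where
  "l_inv E = Min ((\<lambda>F. nu (E - F)) ` {F. max_matching E F})"

definition three_edge_colorable :: "'a set set \<Rightarrow> bool" where
  "three_edge_colorable E \<longleftrightarrow> (\<exists>c :: 'a set \<Rightarrow> nat. (\<forall>e\<in>E. c e < 3) \<and>
     (\<forall>e1\<in>E. \<forall>e2\<in>E. e1 \<noteq> e2 \<and> e1 \<inter> e2 \<noteq> {} \<longrightarrow> c e1 \<noteq> c e2))"

text \<open>Replacing every vertex by a triangle: the vertex v is replaced by the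
  vertices (v,u) for the neighbours u of v; (v,u) is joined to (u,v) (the edge
  corresponding to uv), and the vertices (v,u),(v,w) form a triangle.\<close>
definition tri_V :: "'a set set \<Rightarrow> ('a \<times> 'a) set" where
  "tri_V E = {(v, u). {v, u} \<in> E \<and> v \<noteq> u}"

definition tri_E :: "'a set set \<Rightarrow> ('a \<times> 'a) set set" where
  "tri_E E = {{(v, u), (v, w)} | v u w. {v, u} \<in> E \<and> {v, w} \<in> E \<and> u \<noteq> w \<and> v \<noteq> u \<and> v \<noteq> w}
           \<union> {{(v, u), (u, v)} | v u. {v, u} \<in> E \<and> v \<noteq> u}"

end

theory Submission
  imports Defs
begin

(*
  Let G = (V,E) be a cubic graph with n vertices and m = 3n/2 edges, and let T be the
  triangle graph G_tri.  T has 2m = 3n vertices, and the m "link" edges of T (those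
  corresponding to E) form a perfect matching; hence nu(T) = m and the maximum matchings
  of T are exactly its perfect matchings.

  (1) l(T) = n.  Whatever matching F is removed, every triangle keeps one of its edges,
      giving n disjoint edges; removing the link matching leaves n disjoint triangles.
  (2) L(T) = m iff T has two disjoint perfect matchings.  Every perfect matching of T
      contains one or three links at each triangle, so for two disjoint perfect matchings
      A, B the links at a triangle lie one in A, one in B and one in neither: colouring
      an edge of G by 0, 1, 2 accordingly is a proper 3-edge-colouring.  Conversely a
      3-edge-colouring c yields for each colour k the perfect matching consisting of the
      k-coloured links and of the triangle edges opposite to them, and these are
      disjoint for k = 0, 1.
  Hence, using 2m = 3n, L(T) = 3/2 l(T) iff L(T) = m iff G is 3-edge-colourable.
*)

section \<open>Maximum matchings of a finite edge set\<close>

lemma finite_matchings: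
  assumes "finite H"
  shows "finite {M. matching H M}"
proof -
  have "{M. matching H M} \<subseteq> Pow H" by (auto simp: matching_def)
  then show ?thesis using assms by (simp add: finite_subset)
qed

lemma card_le_nu: "finite H \<Longrightarrow> matching H M \<Longrightarrow> card M \<le> nu H"
  unfolding nu_def by (intro Max_ge) (auto simp: finite_matchings)

lemma nu_attained:
  assumes "finite H"
  obtains M where "matching H M" "card M = nu H"
proof -
  have "matching H {}" by (simp add: matching_def)
  then have "nu H \<in> card ` {M. matching H M}"
    unfolding nu_def using assms by (intro Max_in) (auto simp: finite_matchings)
  then show ?thesis using that by auto
qed

lemma matching_mono: "matching H' M \<Longrightarrow> H' \<subseteq> H \<Longrightarrow> matching H M"
  by (auto simp: matching_def)

lemma nu_Diff_le:
  assumes "finite H"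
  shows "nu (H - F) \<le> nu H"
proof -
  obtain M where "matching (H - F) M" "card M = nu (H - F)"
    using nu_attained[of "H - F"] assms by auto
  then show ?thesis by (metis Diff_subset card_le_nu[OF assms] matching_mono)
qed

lemma card_Union_matching:
  assumes "matching H M" "\<And>e. e \<in> H \<Longrightarrow> card e = 2" "finite M"
  shows "card (\<Union>M) = 2 * card M"
proof -
  have two: "\<And>e. e \<in> M \<Longrightarrow> card e = 2" using assms(1,2) by (auto simp: matching_def)
  have "card (\<Union>M) = sum card M"
  proof (rule card_Union_disjoint)
    show "pairwise disjnt M" using assms(1) by (auto simp: matching_def pairwise_def disjnt_def)
    show "\<And>e. e \<in> M \<Longrightarrow> finite e" using two by (metis card.infinite zero_neq_numeral)
  qed
  also have "\<dots> = 2 * card M" using two by simp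
  finally show ?thesis .
qed

lemma max_matchings_finite_nonempty:
  assumes "finite H"
  shows "finite {F. max_matching H F}" "{F. max_matching H F} \<noteq> {}"
proof -
  have "{F. max_matching H F} \<subseteq> {M. matching H M}" by (auto simp: max_matching_def)
  then show "finite {F. max_matching H F}" using finite_matchings[OF assms] finite_subset by blast
  obtain M where "matching H M" "card M = nu H" using nu_attained[OF assms] .
  then show "{F. max_matching H F} \<noteq> {}" by (auto simp: max_matching_def)
qed

lemma nu_Diff_le_L_inv: "finite H \<Longrightarrow> max_matching H F \<Longrightarrow> nu (H - F) \<le> L_inv H"
  unfolding L_inv_def using max_matchings_finite_nonempty by (intro Max_ge) auto

lemma l_inv_le_nu_Diff: "finite H \<Longrightarrow> max_matching H F \<Longrightarrow> l_inv H \<le> nu (H - F)"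
  unfolding l_inv_def using max_matchings_finite_nonempty by (intro Min_le) auto

lemma L_inv_attained:
  assumes "finite H"
  obtains F where "max_matching H F" "L_inv H = nu (H - F)"
proof -
  have "L_inv H \<in> (\<lambda>F. nu (H - F)) ` {F. max_matching H F}"
    unfolding L_inv_def using max_matchings_finite_nonempty[OF assms] by (intro Max_in) auto
  then show ?thesis using that by auto
qed

lemma l_inv_attained:
  assumes "finite H"
  obtains F where "max_matching H F" "l_inv H = nu (H - F)"
proof -
  have "l_inv H \<in> (\<lambda>F. nu (H - F)) ` {F. max_matching H F}"
    unfolding l_inv_def using max_matchings_finite_nonempty[OF assms] by (intro Min_in) auto
  then show ?thesis using that by auto
qed

lemma matching_same_edge:
  "matching H M \<Longrightarrow> e1 \<in> M \<Longrightarrow> e2 \<in> M \<Longrightarrow> x \<in> e1 \<Longrightarrow> x \<in> e2 \<Longrightarrow> e1 = e2"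
  unfolding matching_def by blast

section \<open>A cubic graph and its triangle graph\<close>

locale cubic_graph =
  fixes V :: "'a set" and E :: "'a set set"
  assumes cubic: "cubic V E"
begin

text \<open>The neighbourhood of v; the triangle replacing v has the corners (v, u), u in N v.\<close>
definition N :: "'a \<Rightarrow> 'a set" where "N v = {u. {v, u} \<in> E}"

abbreviation TV :: "('a \<times> 'a) set" where "TV \<equiv> tri_V E"
abbreviation TE :: "('a \<times> 'a) set set" where "TE \<equiv> tri_E E"

definition link :: "'a \<Rightarrow> 'a \<Rightarrow> ('a \<times> 'a) set" where "link v u = {(v, u), (u, v)}"

lemma edge_form: "e \<in> E \<Longrightarrow> \<exists>u v. e = {u, v} \<and> u \<noteq> v \<and> u \<in> V \<and> v \<in> V"
  using cubic by (auto simp: cubic_def graph_def)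

lemma finite_V: "finite V"
  using cubic by (auto simp: cubic_def graph_def)

lemma nbrD:
  assumes "u \<in> N v"
  shows "v \<noteq> u" "v \<in> V" "u \<in> V"
proof -
  obtain a b where "{v, u} = {a, b}" "a \<noteq> b" "a \<in> V" "b \<in> V"
    using assms edge_form unfolding N_def by blast
  then show "v \<noteq> u" "v \<in> V" "u \<in> V" by (auto simp: doubleton_eq_iff)
qed

lemma N_sym: "u \<in> N v \<longleftrightarrow> v \<in> N u"
  by (auto simp: N_def insert_commute)

lemma finite_N: "finite (N v)"
  using finite_V nbrD(3) by (blast intro: finite_subset)

lemma edge_at:
  assumes "e \<in> E" "x \<in> e"
  shows "\<exists>u\<in>N x. e = {x, u}"
  using edge_form[OF assms(1)] assms by (auto simp: N_def insert_commute)

lemma card_N: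
  assumes "v \<in> V"
  shows "card (N v) = 3"
proof -
  have "bij_betw (\<lambda>u. {v, u}) (N v) {e \<in> E. v \<in> e}"
  proof (rule bij_betwI')
    show "\<And>x y. x \<in> N v \<Longrightarrow> y \<in> N v \<Longrightarrow> ({v, x} = {v, y}) = (x = y)"
      using nbrD by (auto simp: doubleton_eq_iff)
    show "\<And>x. x \<in> N v \<Longrightarrow> {v, x} \<in> {e \<in> E. v \<in> e}" by (auto simp: N_def)
    show "\<And>e. e \<in> {e \<in> E. v \<in> e} \<Longrightarrow> \<exists>x\<in>N v. e = {v, x}" using edge_at by blast
  qed
  then have "card (N v) = degree E v" unfolding degree_def by (rule bij_betw_same_card)
  then show ?thesis using cubic assms by (auto simp: cubic_def)
qed

lemma three_nbrs:
  assumes "v \<in> V"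
  obtains a b c where "N v = {a, b, c}" "a \<noteq> b" "b \<noteq> c" "a \<noteq> c"
  using card_N[OF assms] by (auto simp: card_3_iff)

lemma N_eq3:
  assumes "u \<in> N v" "w \<in> N v" "z \<in> N v" "u \<noteq> w" "w \<noteq> z" "u \<noteq> z"
  shows "N v = {u, w, z}"
  using assms card_N[OF nbrD(2)[OF assms(1)]] finite_N
  by (intro card_subset_eq[symmetric]) auto

lemma third_nbr:
  assumes "u \<in> N v" "y \<in> N v"
  obtains w where "w \<in> N v" "w \<noteq> u" "w \<noteq> y"
proof -
  have "\<not> N v \<subseteq> {u, y}"
  proof
    assume "N v \<subseteq> {u, y}"
    then have "card (N v) \<le> card {u, y}" by (intro card_mono) auto
    also have "\<dots> \<le> 2" by (simp add: card_insert_if)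
    finally have "card (N v) \<le> 2" .
    then show False using card_N[OF nbrD(2)[OF assms(1)]] by simp
  qed
  then show ?thesis using that by blast
qed

lemma TV_iff: "(v, u) \<in> TV \<longleftrightarrow> u \<in> N v"
  using nbrD(1)[of u v] by (auto simp: tri_V_def N_def)

lemma TE_iff: "e \<in> TE \<longleftrightarrow>
    (\<exists>v u w. e = {(v, u), (v, w)} \<and> u \<in> N v \<and> w \<in> N v \<and> u \<noteq> w) \<or> (\<exists>v u. e = link v u \<and> u \<in> N v)"
proof
  assume "e \<in> TE"
  then show "(\<exists>v u w. e = {(v, u), (v, w)} \<and> u \<in> N v \<and> w \<in> N v \<and> u \<noteq> w) \<or>
      (\<exists>v u. e = link v u \<and> u \<in> N v)"
    unfolding tri_E_def link_def N_def by blast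
next
  assume "(\<exists>v u w. e = {(v, u), (v, w)} \<and> u \<in> N v \<and> w \<in> N v \<and> u \<noteq> w) \<or>
      (\<exists>v u. e = link v u \<and> u \<in> N v)"
  then show "e \<in> TE"
  proof
    assume "\<exists>v u w. e = {(v, u), (v, w)} \<and> u \<in> N v \<and> w \<in> N v \<and> u \<noteq> w"
    then obtain v u w where "e = {(v, u), (v, w)}" "u \<in> N v" "w \<in> N v" "u \<noteq> w" by blast
    moreover have "v \<noteq> u" "v \<noteq> w" using nbrD(1) calculation by auto
    ultimately show "e \<in> TE" unfolding tri_E_def N_def by blast
  next
    assume "\<exists>v u. e = link v u \<and> u \<in> N v"
    then obtain v u where "e = link v u" "u \<in> N v" by blast
    moreover have "v \<noteq> u" using nbrD(1) calculation by auto
    ultimately show "e \<in> TE" unfolding tri_E_def N_def link_def by blast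
  qed
qed

lemma link_in_TE: "u \<in> N v \<Longrightarrow> link v u \<in> TE"
  unfolding TE_iff by blast

lemma tri_in_TE: "u \<in> N v \<Longrightarrow> w \<in> N v \<Longrightarrow> u \<noteq> w \<Longrightarrow> {(v, u), (v, w)} \<in> TE"
  unfolding TE_iff by blast

lemma TE_edge:
  assumes "e \<in> TE"
  shows "e \<subseteq> TV" "card e = 2"
proof -
  have "e \<subseteq> TV \<and> card e = 2"
    using assms nbrD(1) N_sym unfolding TE_iff by (auto simp: TV_iff link_def)
  then show "e \<subseteq> TV" "card e = 2" by auto
qed

lemma finite_TV: "finite TV"
proof -
  have "TV \<subseteq> V \<times> V" using nbrD TV_iff by auto
  then show ?thesis using finite_V finite_subset by blast
qed

lemma finite_TE: "finite TE"
proof -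
  have "TE \<subseteq> Pow TV" using TE_edge by blast
  then show ?thesis using finite_TV by (meson finite_Pow_iff finite_subset)
qed

lemma finite_TE_Diff: "finite (TE - F)"
  using finite_TE by simp

lemma TE_at_vertex:
  assumes "e \<in> TE" "(v, u) \<in> e"
  shows "e = link v u \<or> (\<exists>w\<in>N v. w \<noteq> u \<and> e = {(v, u), (v, w)})"
  using assms unfolding TE_iff by (auto simp: link_def insert_commute)

lemma link_neq_tri: "u \<in> N v \<Longrightarrow> link v u \<noteq> {(a, b), (a, c)}"
  using nbrD(1) unfolding link_def by (auto simp: doubleton_eq_iff)

text \<open>Two triangle edges at the same vertex meet, since the triangle has only three corners.\<close>

lemma tri_edges_meet:
  assumes "a \<in> N v" "b \<in> N v" "a \<noteq> b" "c \<in> N v" "d \<in> N v" "c \<noteq> d"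
  shows "{(v, a), (v, b)} \<inter> {(v, c), (v, d)} \<noteq> {}"
proof
  assume "{(v, a), (v, b)} \<inter> {(v, c), (v, d)} = {}"
  then have "card {a, b, c, d} = 4" using assms(3,6) by (auto simp: card_insert_if)
  moreover have "card {a, b, c, d} \<le> card (N v)" using assms finite_N by (intro card_mono) auto
  ultimately show False using card_N[OF nbrD(2)[OF assms(1)]] by simp
qed

section \<open>Perfect matchings of the triangle graph\<close>

definition perfect :: "('a \<times> 'a) set set \<Rightarrow> bool" where
  "perfect F \<longleftrightarrow> matching TE F \<and> (\<forall>x\<in>TV. \<exists>e\<in>F. x \<in> e)"

definition links :: "('a \<times> 'a) set set" where "links = {link v u | v u. u \<in> N v}"

lemma links_matching: "matching TE links"
  unfolding matching_def links_def using link_in_TE by (auto simp: link_def)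

lemma card_links: "card links = card E"
proof -
  have "bij_betw (\<lambda>x. fst ` x) links E"
  proof (rule bij_betwI')
    show "\<And>x y. x \<in> links \<Longrightarrow> y \<in> links \<Longrightarrow> (fst ` x = fst ` y) = (x = y)"
      unfolding links_def link_def by (auto simp: doubleton_eq_iff)
    show "\<And>x. x \<in> links \<Longrightarrow> fst ` x \<in> E"
      unfolding links_def link_def N_def by (auto simp: insert_commute)
    show "\<exists>x\<in>links. e = fst ` x" if e: "e \<in> E" for e
    proof -
      obtain a b where "e = {a, b}" "a \<noteq> b" using edge_form[OF e] by blast
      then have "link a b \<in> links" "fst ` link a b = e" using e
        unfolding links_def link_def N_def by auto
      then show ?thesis by metis
    qed
  qed
  then show ?thesis by (rule bij_betw_same_card)
qed

lemma Union_links: "\<Union>links = TV"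
proof
  show "\<Union>links \<subseteq> TV" unfolding links_def link_def using N_sym by (auto simp: TV_iff)
  show "TV \<subseteq> \<Union>links"
  proof
    fix x assume "x \<in> TV"
    then obtain a b where "x = (a, b)" "b \<in> N a" by (cases x) (auto simp: TV_iff)
    then have "link a b \<in> links" "x \<in> link a b" unfolding links_def link_def by auto
    then show "x \<in> \<Union>links" by blast
  qed
qed

text \<open>T has 2m vertices and a perfect matching of size m, so nu(T) = m.\<close>

lemma card_TV: "card TV = 2 * card E"
  using card_Union_matching[OF links_matching TE_edge(2)] finite_TE links_matching
    Union_links card_links
  by (metis finite_subset matching_def)

lemma nu_TE: "nu TE = card E"
proof (rule antisym)
  obtain M where M: "matching TE M" "card M = nu TE" using nu_attained finite_TE by blast
  have "finite M" using M(1) finite_TE by (auto simp: matching_def intro: finite_subset)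
  then have "card (\<Union>M) = 2 * card M" using card_Union_matching[OF M(1) TE_edge(2)] by blast
  moreover have "\<Union>M \<subseteq> TV" using M(1) TE_edge(1) by (auto simp: matching_def)
  then have "card (\<Union>M) \<le> card TV" using finite_TV card_mono by blast
  ultimately show "nu TE \<le> card E" using M(2) card_TV by simp
  show "card E \<le> nu TE" using card_le_nu[OF finite_TE links_matching] card_links by simp
qed

text \<open>Since the triangle graph has a perfect matching, its maximum matchings are exactly
  its perfect matchings.\<close>

lemma max_matching_iff_perfect: "max_matching TE F \<longleftrightarrow> perfect F"
proof (cases "matching TE F")
  case True
  have "finite F" using True finite_TE by (auto simp: matching_def intro: finite_subset)
  then have card_U: "card (\<Union>F) = 2 * card F" using card_Union_matching[OF True TE_edge(2)] by blast
  have sub: "\<Union>F \<subseteq> TV" using True TE_edge(1) by (auto simp: matching_def)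
  have "card F = card E \<longleftrightarrow> card (\<Union>F) = card TV" using card_U card_TV by simp
  also have "\<dots> \<longleftrightarrow> TV \<subseteq> \<Union>F" using card_subset_eq[OF finite_TV sub] sub by auto
  also have "\<dots> \<longleftrightarrow> (\<forall>x\<in>TV. \<exists>e\<in>F. x \<in> e)" by (simp add: subset_eq)
  finally show ?thesis using True by (simp add: max_matching_def perfect_def nu_TE)
qed (simp add: max_matching_def perfect_def)

lemma perfect_links: "perfect links"
  unfolding max_matching_iff_perfect[symmetric] max_matching_def
  using links_matching card_links nu_TE by simp

text \<open>Counting the corners of all triangles: 2m = 3n.\<close>

lemma handshake: "2 * card E = 3 * card V"
proof -
  have "TV = Sigma V N" using nbrD(2) by (auto simp: TV_iff)
  then have "card TV = (\<Sum>v\<in>V. card (N v))" using finite_V finite_N by (simp add: card_SigmaI)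
  also have "\<dots> = (\<Sum>v\<in>V. 3)" using card_N by simp
  finally show ?thesis using card_TV by simp
qed

section \<open>The invariant l of the triangle graph\<close>

text \<open>A matching contains at most one edge of each triangle, so every triangle keeps an
  edge after its removal.\<close>

lemma triangle_edge_survives:
  assumes "v \<in> V" "matching TE F"
  shows "\<exists>t\<in>TE - F. fst ` t = {v}"
proof -
  obtain a b c where abc: "N v = {a, b, c}" "a \<noteq> b" "b \<noteq> c" "a \<noteq> c"
    using three_nbrs[OF assms(1)] .
  have in_TE: "{(v, a), (v, b)} \<in> TE" "{(v, a), (v, c)} \<in> TE" using abc by (simp_all add: tri_in_TE)
  have "{(v, a), (v, b)} \<noteq> {(v, a), (v, c)}" using abc by (auto simp: doubleton_eq_iff)
  then have "{(v, a), (v, b)} \<notin> F \<or> {(v, a), (v, c)} \<notin> F"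
    using matching_same_edge[OF assms(2), of _ _ "(v, a)"] by blast
  moreover have "fst ` {(v, a), (v, b)} = {v}" "fst ` {(v, a), (v, c)} = {v}" by auto
  ultimately show ?thesis using in_TE by blast
qed

lemma card_V_le_nu_Diff:
  assumes "matching TE F"
  shows "card V \<le> nu (TE - F)"
proof -
  have "\<forall>v\<in>V. \<exists>t. t \<in> TE - F \<and> fst ` t = {v}" using triangle_edge_survives[OF _ assms] by blast
  then obtain f where f_edge: "\<And>v. v \<in> V \<Longrightarrow> f v \<in> TE - F"
    and f_apex: "\<And>v. v \<in> V \<Longrightarrow> fst ` f v = {v}"
    using bchoice by metis
  have inj: "inj_on f V"
  proof (rule inj_onI)
    fix v w assume vw: "v \<in> V" "w \<in> V" "f v = f w"
    have "{v} = fst ` f w" using f_apex[OF vw(1)] vw(3) by simp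
    also have "\<dots> = {w}" using f_apex[OF vw(2)] .
    finally show "v = w" by simp
  qed
  have "matching (TE - F) (f ` V)"
    unfolding matching_def
  proof (intro conjI ballI impI)
    show "f ` V \<subseteq> TE - F" using f_edge by blast
    fix e1 e2 assume "e1 \<in> f ` V" "e2 \<in> f ` V" "e1 \<noteq> e2"
    then obtain v w where "v \<in> V" "w \<in> V" "e1 = f v" "e2 = f w" "v \<noteq> w" by blast
    then have apex: "fst ` e1 = {v}" "fst ` e2 = {w}" using f_apex by auto
    show "e1 \<inter> e2 = {}"
    proof (rule ccontr)
      assume "e1 \<inter> e2 \<noteq> {}"
      then obtain x where "x \<in> e1" "x \<in> e2" by blast
      then have "fst x = v" "fst x = w" using apex by (metis image_eqI singletonD)+
      then show False using \<open>v \<noteq> w\<close> by simp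
    qed
  qed
  then have "card (f ` V) \<le> nu (TE - F)" by (rule card_le_nu[OF finite_TE_Diff])
  then show ?thesis using card_image[OF inj] by simp
qed

text \<open>Removing the links leaves n disjoint triangles: each matching edge is a triangle edge,
  determined up to one choice by its apex.\<close>

lemma nu_without_links: "nu (TE - links) \<le> card V"
proof -
  obtain M where M: "matching (TE - links) M" "card M = nu (TE - links)"
    using nu_attained[OF finite_TE_Diff] by blast
  have tri: "\<exists>v a b. e = {(v, a), (v, b)} \<and> a \<in> N v \<and> b \<in> N v \<and> a \<noteq> b" if "e \<in> M" for e
  proof -
    have "e \<in> TE" "e \<notin> links" using that M(1) by (auto simp: matching_def)
    moreover have "\<not> (\<exists>v u. e = link v u \<and> u \<in> N v)" using \<open>e \<notin> links\<close> unfolding links_def by blast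
    ultimately show ?thesis unfolding TE_iff by blast
  qed
  let ?apex = "\<lambda>e. the_elem (fst ` e)"
  have "inj_on ?apex M"
  proof (rule inj_onI)
    fix e1 e2 assume e: "e1 \<in> M" "e2 \<in> M" "?apex e1 = ?apex e2"
    obtain v a b where 1: "e1 = {(v, a), (v, b)}" "a \<in> N v" "b \<in> N v" "a \<noteq> b" using tri e(1) by blast
    obtain w c d where 2: "e2 = {(w, c), (w, d)}" "c \<in> N w" "d \<in> N w" "c \<noteq> d" using tri e(2) by blast
    have "v = w" using e(3) 1 2 by simp
    then have "e1 \<inter> e2 \<noteq> {}"
      unfolding 1(1) 2(1) using tri_edges_meet[OF 1(2-4) 2(2-4)[folded \<open>v = w\<close>]] by simp
    then show "e1 = e2" using matching_same_edge[OF M(1) e(1,2)] by blast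
  qed
  moreover have "?apex ` M \<subseteq> V"
  proof
    fix x assume "x \<in> ?apex ` M"
    then obtain e where "e \<in> M" "x = ?apex e" by blast
    moreover obtain v a b where "e = {(v, a), (v, b)}" "a \<in> N v" using tri \<open>e \<in> M\<close> by blast
    ultimately show "x \<in> V" using nbrD(2) by simp
  qed
  ultimately have "card M \<le> card V" by (rule card_inj_on_le[OF _ _ finite_V])
  then show ?thesis using M(2) by simp
qed

lemma l_inv_TE: "l_inv TE = card V"
proof (rule antisym)
  have "max_matching TE links" using perfect_links max_matching_iff_perfect by simp
  then show "l_inv TE \<le> card V" using l_inv_le_nu_Diff[OF finite_TE] nu_without_links by fastforce
  obtain F where "max_matching TE F" "l_inv TE = nu (TE - F)" using l_inv_attained[OF finite_TE] .
  then show "card V \<le> l_inv TE" using card_V_le_nu_Diff by (simp add: max_matching_def)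
qed

section \<open>The invariant L and pairs of disjoint perfect matchings\<close>

text \<open>Removing a matching cannot increase nu, so L(T) is at most m, with equality exactly
  when some perfect matching avoids another one.\<close>

lemma L_inv_le: "L_inv TE \<le> card E"
proof -
  obtain F where "max_matching TE F" "L_inv TE = nu (TE - F)" using L_inv_attained[OF finite_TE] .
  then show ?thesis using nu_Diff_le[OF finite_TE] nu_TE by metis
qed

lemma L_inv_eq_iff: "L_inv TE = card E \<longleftrightarrow> (\<exists>A B. perfect A \<and> perfect B \<and> A \<inter> B = {})"
proof
  assume L: "L_inv TE = card E"
  obtain A where A: "max_matching TE A" "L_inv TE = nu (TE - A)" using L_inv_attained[OF finite_TE] .
  obtain B where B: "matching (TE - A) B" "card B = card E"
    using nu_attained[OF finite_TE_Diff] L A(2) by metis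
  have "max_matching TE B" using B nu_TE by (auto simp: max_matching_def intro: matching_mono)
  moreover have "A \<inter> B = {}" using B(1) by (auto simp: matching_def)
  ultimately show "\<exists>A B. perfect A \<and> perfect B \<and> A \<inter> B = {}"
    using A(1) max_matching_iff_perfect by blast
next
  assume "\<exists>A B. perfect A \<and> perfect B \<and> A \<inter> B = {}"
  then obtain A B where AB: "perfect A" "perfect B" "A \<inter> B = {}" by blast
  then have "max_matching TE A" "max_matching TE B" using max_matching_iff_perfect by auto
  then have "matching (TE - A) B" "card B = card E" using AB(3) nu_TE
    by (auto simp: max_matching_def matching_def)
  then have "card E \<le> nu (TE - A)" using card_le_nu[OF finite_TE_Diff] by metis
  also have "\<dots> \<le> L_inv TE" using nu_Diff_le_L_inv[OF finite_TE \<open>max_matching TE A\<close>] .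
  finally show "L_inv TE = card E" using L_inv_le by simp
qed

section \<open>From two disjoint perfect matchings to a 3-edge-colouring\<close>

lemma perfect_corner:
  assumes "perfect F" "x \<in> N v" "link v x \<notin> F"
  shows "\<exists>y\<in>N v. y \<noteq> x \<and> {(v, x), (v, y)} \<in> F"
proof -
  have "(v, x) \<in> TV" using assms(2) by (simp add: TV_iff)
  then obtain e where e: "e \<in> F" "(v, x) \<in> e" using assms(1) by (auto simp: perfect_def)
  have "e \<in> TE" using e(1) assms(1) by (auto simp: perfect_def matching_def)
  then show ?thesis using TE_at_vertex[OF _ e(2)] e(1) assms(3) by metis
qed

text \<open>A perfect matching contains a link at every triangle: the triangle's three corners
  cannot all be covered by (pairwise meeting) triangle edges.\<close>

lemma perfect_has_link:
  assumes F: "perfect F" and v: "v \<in> V"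
  shows "\<exists>x\<in>N v. link v x \<in> F"
proof (rule ccontr)
  assume no_link: "\<not> ?thesis"
  have match: "matching TE F" using F by (simp add: perfect_def)
  obtain u where u: "u \<in> N v" using three_nbrs[OF v] by blast
  then obtain y where y: "y \<in> N v" "y \<noteq> u" "{(v, u), (v, y)} \<in> F"
    using perfect_corner[OF F] no_link by blast
  obtain r where r: "r \<in> N v" "r \<noteq> u" "r \<noteq> y" using third_nbr[OF u y(1)] .
  then obtain s where s: "s \<in> N v" "s \<noteq> r" "{(v, r), (v, s)} \<in> F"
    using perfect_corner[OF F] no_link by blast
  have "{(v, u), (v, y)} \<inter> {(v, r), (v, s)} \<noteq> {}"
    using tri_edges_meet[OF u y(1) y(2)[symmetric] r(1) s(1) s(2)[symmetric]] .
  then have "{(v, u), (v, y)} = {(v, r), (v, s)}" using matching_same_edge[OF match y(3) s(3)] by blast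
  then have "(v, r) \<in> {(v, u), (v, y)}" by simp
  then show False using r by auto
qed

lemma perfect_two_links:
  assumes F: "perfect F" and uw: "u \<in> N v" "w \<in> N v" "u \<noteq> w"
    and links: "link v u \<in> F" "link v w \<in> F" and z: "z \<in> N v"
  shows "link v z \<in> F"
proof (rule ccontr)
  assume z_out: "link v z \<notin> F"
  then have "z \<noteq> u" "z \<noteq> w" using links by auto
  then have "N v = {u, w, z}" using N_eq3 uw z by blast
  obtain y where y: "y \<in> N v" "y \<noteq> z" "{(v, z), (v, y)} \<in> F" using perfect_corner[OF F z z_out] by blast
  then have "link v y \<in> F" using \<open>N v = {u, w, z}\<close> links by auto
  then have "link v y = {(v, z), (v, y)}"
    using matching_same_edge[OF _ _ y(3), of TE _ "(v, y)"] F by (auto simp: perfect_def link_def)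
  then show False using link_neq_tri y(1) by metis
qed

lemma disjoint_perfect_links:
  assumes A: "perfect A" and B: "perfect B" and AB: "A \<inter> B = {}"
    and uw: "u \<in> N v" "w \<in> N v" "u \<noteq> w"
  shows "\<not> (link v u \<in> A \<and> link v w \<in> A)" and "\<not> (link v u \<notin> A \<union> B \<and> link v w \<notin> A \<union> B)"
proof -
  have v: "v \<in> V" using nbrD(2)[OF uw(1)] .
  obtain b where b: "b \<in> N v" "link v b \<in> B" using perfect_has_link[OF B v] by blast
  show "\<not> (link v u \<in> A \<and> link v w \<in> A)"
    using perfect_two_links[OF A uw _ _ b(1)] b(2) AB by blast
  show "\<not> (link v u \<notin> A \<union> B \<and> link v w \<notin> A \<union> B)"
  proof
    assume out: "link v u \<notin> A \<union> B \<and> link v w \<notin> A \<union> B"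
    obtain a where a: "a \<in> N v" "link v a \<in> A" using perfect_has_link[OF A v] by blast
    have "a \<noteq> u" "a \<noteq> w" "b \<noteq> u" "b \<noteq> w" using out a b by auto
    then have "a = b" using N_eq3[OF uw(1,2) a(1)] uw(3) b(1) by auto
    then show False using a b AB by blast
  qed
qed

text \<open>Recovers from an edge {v,u} of G its link, independently of the order of v and u.\<close>
definition lift :: "'a set \<Rightarrow> ('a \<times> 'a) set" where "lift e = {(a, b). {a, b} = e \<and> a \<noteq> b}"

lemma lift_edge: "u \<in> N v \<Longrightarrow> lift {v, u} = link v u"
  using nbrD(1)[of u v] by (auto simp: lift_def link_def doubleton_eq_iff)

lemma colorable_of_disjoint_perfect:
  assumes A: "perfect A" and B: "perfect B" and AB: "A \<inter> B = {}"
  shows "three_edge_colorable E"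
proof -
  define col where "col e = (if lift e \<in> A then 0 else if lift e \<in> B then 1 else (2::nat))" for e
  have proper: "col e1 \<noteq> col e2" if e: "e1 \<in> E" "e2 \<in> E" "e1 \<noteq> e2" "e1 \<inter> e2 \<noteq> {}" for e1 e2
  proof -
    obtain x where x: "x \<in> e1" "x \<in> e2" using e(4) by blast
    obtain u where u: "u \<in> N x" "e1 = {x, u}" using edge_at e(1) x(1) by blast
    obtain w where w: "w \<in> N x" "e2 = {x, w}" using edge_at e(2) x(2) by blast
    have uw: "u \<noteq> w" using u w e(3) by blast
    have BA: "B \<inter> A = {}" using AB by blast
    have "\<not> (link x u \<in> A \<and> link x w \<in> A)" "\<not> (link x u \<in> B \<and> link x w \<in> B)"
      "\<not> (link x u \<notin> A \<union> B \<and> link x w \<notin> A \<union> B)"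
      using disjoint_perfect_links[OF A B AB u(1) w(1) uw] disjoint_perfect_links[OF B A BA u(1) w(1) uw]
      by auto
    then show ?thesis unfolding col_def u(2) w(2) lift_edge[OF u(1)] lift_edge[OF w(1)] by auto
  qed
  show ?thesis unfolding three_edge_colorable_def
  proof (intro exI[of _ col] conjI ballI impI)
    show "\<And>e. col e < 3" by (simp add: col_def)
  qed (use proper in blast)
qed

end

section \<open>From a 3-edge-colouring to two disjoint perfect matchings\<close>

locale coloured_cubic_graph = cubic_graph +
  fixes c :: "'a set \<Rightarrow> nat"
  assumes colour_lt: "\<And>e. e \<in> E \<Longrightarrow> c e < 3"
    and colour_proper: "\<And>e1 e2. e1 \<in> E \<Longrightarrow> e2 \<in> E \<Longrightarrow> e1 \<noteq> e2 \<Longrightarrow> e1 \<inter> e2 \<noteq> {} \<Longrightarrow> c e1 \<noteq> c e2"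
begin

lemma colours_differ:
  assumes "u \<in> N v" "w \<in> N v" "u \<noteq> w"
  shows "c {v, u} \<noteq> c {v, w}"
  using assms nbrD(1)[OF assms(1)]
  by (intro colour_proper) (auto simp: N_def doubleton_eq_iff)

lemma colour_lt_nbr: "u \<in> N v \<Longrightarrow> c {v, u} < 3"
  using colour_lt by (auto simp: N_def)

lemma colour_attained:
  assumes "v \<in> V" "k < 3"
  shows "\<exists>y\<in>N v. c {v, y} = k"
proof -
  obtain a b d where abd: "N v = {a, b, d}" "a \<noteq> b" "b \<noteq> d" "a \<noteq> d" using three_nbrs[OF assms(1)] .
  then have "a \<in> N v" "b \<in> N v" "d \<in> N v" by auto
  then have "c {v, a} \<noteq> c {v, b}" "c {v, b} \<noteq> c {v, d}" "c {v, a} \<noteq> c {v, d}"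
    "c {v, a} < 3" "c {v, b} < 3" "c {v, d} < 3" using colours_differ colour_lt_nbr abd by auto
  then have "k = c {v, a} \<or> k = c {v, b} \<or> k = c {v, d}" using assms(2) by arith
  then show ?thesis using abd by auto
qed

definition colour_matching :: "nat \<Rightarrow> ('a \<times> 'a) set set" where
  "colour_matching k = {link v u | v u. u \<in> N v \<and> c {v, u} = k} \<union>
     {{(v, u), (v, w)} | v u w. u \<in> N v \<and> w \<in> N v \<and> u \<noteq> w \<and> c {v, u} \<noteq> k \<and> c {v, w} \<noteq> k}"

lemma colour_matching_sub: "colour_matching k \<subseteq> TE"
  unfolding colour_matching_def using link_in_TE tri_in_TE by blast

lemma colour_matching_at:
  assumes "e \<in> colour_matching k" "(v, u) \<in> e"
  shows "(e = link v u \<and> c {v, u} = k) \<or>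
         (\<exists>w\<in>N v. w \<noteq> u \<and> e = {(v, u), (v, w)} \<and> c {v, u} \<noteq> k \<and> c {v, w} \<noteq> k)"
  using assms(1) unfolding colour_matching_def Un_iff
proof
  assume "e \<in> {link a b | a b. b \<in> N a \<and> c {a, b} = k}"
  then obtain a b where ab: "e = link a b" "b \<in> N a" "c {a, b} = k" by blast
  then have "(v, u) = (a, b) \<or> (v, u) = (b, a)" using assms(2) by (auto simp: link_def)
  then show ?thesis using ab by (auto simp: link_def insert_commute)
next
  assume "e \<in> {{(a, b), (a, d)} | a b d. b \<in> N a \<and> d \<in> N a \<and> b \<noteq> d \<and> c {a, b} \<noteq> k \<and> c {a, d} \<noteq> k}"
  then obtain a b d where abd: "e = {(a, b), (a, d)}" "b \<in> N a" "d \<in> N a" "b \<noteq> d"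
    "c {a, b} \<noteq> k" "c {a, d} \<noteq> k" by blast
  then have "(v, u) = (a, b) \<or> (v, u) = (a, d)" using assms(2) by auto
  then show ?thesis
  proof
    assume "(v, u) = (a, b)" then show ?thesis using abd by auto
  next
    assume "(v, u) = (a, d)" then show ?thesis using abd by (auto simp: insert_commute)
  qed
qed

lemma colour_matching_matching:
  assumes "k < 3"
  shows "matching TE (colour_matching k)"
  unfolding matching_def
proof (intro conjI ballI impI)
  show "colour_matching k \<subseteq> TE" by (rule colour_matching_sub)
  fix e1 e2 assume e: "e1 \<in> colour_matching k" "e2 \<in> colour_matching k" "e1 \<noteq> e2"
  show "e1 \<inter> e2 = {}"
  proof (rule ccontr)
    assume "e1 \<inter> e2 \<noteq> {}"
    then obtain v u where x: "(v, u) \<in> e1" "(v, u) \<in> e2" by auto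
    note at1 = colour_matching_at[OF e(1) x(1)] and at2 = colour_matching_at[OF e(2) x(2)]
    then obtain w1 w2 where w1: "w1 \<in> N v" "w1 \<noteq> u" "e1 = {(v, u), (v, w1)}" "c {v, u} \<noteq> k" "c {v, w1} \<noteq> k"
      and w2: "w2 \<in> N v" "w2 \<noteq> u" "e2 = {(v, u), (v, w2)}" "c {v, w2} \<noteq> k"
      using e(3) by blast
    have u: "u \<in> N v" using TE_edge(1) colour_matching_sub e(1) x(1) TV_iff by blast
    have "w1 \<noteq> w2" using w1 w2 e(3) by blast
    then have "N v = {u, w1, w2}" using N_eq3[OF u w1(1) w2(1)] w1 w2 by auto
    then show False using colour_attained[OF nbrD(2)[OF u] assms] w1 w2 by auto
  qed
qed

lemma colour_matching_perfect:
  assumes "k < 3"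
  shows "perfect (colour_matching k)"
  unfolding perfect_def
proof (intro conjI ballI colour_matching_matching[OF assms])
  fix x assume "x \<in> TV"
  then obtain v u where x: "x = (v, u)" "u \<in> N v" using TV_iff by (cases x) auto
  show "\<exists>e\<in>colour_matching k. x \<in> e"
  proof (cases "c {v, u} = k")
    case True
    then have "link v u \<in> colour_matching k" using x unfolding colour_matching_def by blast
    then show ?thesis using x by (auto simp: link_def)
  next
    case False
    obtain y where y: "y \<in> N v" "c {v, y} = k" using colour_attained[OF nbrD(2)[OF x(2)] assms] by blast
    obtain w where w: "w \<in> N v" "w \<noteq> u" "w \<noteq> y" using third_nbr[OF x(2) y(1)] .
    have "c {v, w} \<noteq> k" using colours_differ[OF w(1) y(1) w(3)] y(2) by simp
    then have "{(v, u), (v, w)} \<in> colour_matching k" using x w False unfolding colour_matching_def by blast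
    then show ?thesis using x by auto
  qed
qed

lemma colour_matchings_disjoint: "colour_matching 0 \<inter> colour_matching 1 = {}"
proof (rule ccontr)
  assume "colour_matching 0 \<inter> colour_matching 1 \<noteq> {}"
  then obtain e where e: "e \<in> colour_matching 0" "e \<in> colour_matching 1" by blast
  have "e \<in> TE" using e(1) colour_matching_sub by blast
  then have "e \<noteq> {}" using TE_edge(2) by fastforce
  then obtain x where "x \<in> e" by blast
  then obtain v u where x: "(v, u) \<in> e" by (cases x) simp
  note at0 = colour_matching_at[OF e(1) x] and at1 = colour_matching_at[OF e(2) x]
  have "(v, u) \<in> TV" using TE_edge(1)[OF \<open>e \<in> TE\<close>] x by blast
  then have u: "u \<in> N v" by (simp add: TV_iff)
  show False
  proof (cases "e = link v u")
    case True
    then have "e \<noteq> {(v, u), (v, w)}" for w using link_neq_tri[OF u] by simp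
    then have "c {v, u} = 0" "c {v, u} = 1" using at0 at1 by auto
    then show False by simp
  next
    case False
    obtain w where w: "w \<in> N v" "w \<noteq> u" "e = {(v, u), (v, w)}" "c {v, u} \<noteq> 0" "c {v, w} \<noteq> 0"
      using at0 False by blast
    obtain w' where w': "e = {(v, u), (v, w')}" "c {v, u} \<noteq> 1" "c {v, w'} \<noteq> 1"
      using at1 False by blast
    have "(v, w) \<in> e" using w(3) by simp
    then have "w = w'" using w'(1) w(2) by simp
    then have "c {v, u} = 2" "c {v, w} = 2"
      using w(4,5) w'(2,3) colour_lt_nbr[OF u] colour_lt_nbr[OF w(1)] by presburger+
    then show False using colours_differ[OF u w(1)] w(2) by simp
  qed
qed

end

context cubic_graph
begin

lemma colorable_iff_L_inv: "three_edge_colorable E \<longleftrightarrow> L_inv TE = card E"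
proof
  assume "three_edge_colorable E"
  then obtain c :: "'a set \<Rightarrow> nat" where c: "\<forall>e\<in>E. c e < 3"
    "\<forall>e1\<in>E. \<forall>e2\<in>E. e1 \<noteq> e2 \<and> e1 \<inter> e2 \<noteq> {} \<longrightarrow> c e1 \<noteq> c e2"
    unfolding three_edge_colorable_def by blast
  interpret coloured: coloured_cubic_graph V E c using c by unfold_locales auto
  have "perfect (coloured.colour_matching 0)" "perfect (coloured.colour_matching 1)"
    using coloured.colour_matching_perfect by simp_all
  then show "L_inv TE = card E"
    unfolding L_inv_eq_iff using coloured.colour_matchings_disjoint by blast
next
  assume "L_inv TE = card E"
  then show "three_edge_colorable E"
    using colorable_of_disjoint_perfect unfolding L_inv_eq_iff by blast
qed

end

theorem mainTheorem8:
  fixes V :: "'a set" and E :: "'a set set"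
  assumes "cubic V E" and "bridgeless V E"
  shows "three_edge_colorable E \<longleftrightarrow>
         real (L_inv (tri_E E)) = 3 / 2 * real (l_inv (tri_E E))"
proof -
  interpret cubic_graph V E using assms(1) by unfold_locales
  have "real (L_inv TE) = 3 / 2 * real (l_inv TE) \<longleftrightarrow> 2 * real (L_inv TE) = 3 * real (card V)"
    using l_inv_TE by auto
  also have "\<dots> \<longleftrightarrow> 2 * L_inv TE = 3 * card V" by linarith
  also have "\<dots> \<longleftrightarrow> L_inv TE = card E" using handshake by linarith
  finally show ?thesis using colorable_iff_L_inv by simp
qed

end
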